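(* Let $\mathcal{X}_g^*\triangleq \operatorname*{arg\,min}_{\mathbf{z}\in \mathcal{Z}} g(\mathbf{z})$ be the solution set of the lower-level problem and let $\mathcal{X}_k \triangleq \mathcal{Z} \cap \{\mathbf{s}\in\mathbb{R}^d \mid \langle \nabla g(\mathbf{x}_k), \mathbf{s}-\mathbf{x}_k\rangle \leq g(\mathbf{x}_0)-g(\mathbf{x}_k)\}$. Then for any $k\geq 0$, $\mathcal{X}^*_g \subseteq \mathcal{X}_k$.
   Context: Consider the simple bilevel problem $\min_{\mathbf{x}\in\mathbb{R}^d} f(\mathbf{x})$ s.t. $\mathbf{x}\in \operatorname*{arg\,min}_{\mathbf{z}\in\mathcal{Z}} g(\mathbf{z})$, where $\mathcal{Z}\subset\mathbb{R}^d$ is compact and convex and $g$ is convex and continuously differentiable on an open set containing $\mathcal{Z}$. Let $g^*=\min_{\mathbf{z}\in\mathcal{Z}} g(\mathbf{z})$. The points $\mathbf{x}_0,\mathbf{x}_1,\dots$ are iterates in $\mathcal{Z}$ (generated by the CG-BiO algorithm: $\mathbf{x}_0\in\mathcal{Z}$ with $g(\mathbf{x}_0)-g^*\le\epsilon_g/2$, $\mathbf{s}_k\in\operatorname*{arg\,min}_{\mathbf{s}\in\mathcal{X}_k}\langle\nabla f(\mathbf{x}_k),\mathbf{s}\rangle$, $\mathbf{x}_{k+1}=(1-\gamma_k)\mathbf{x}_k+\gamma_k\mathbf{s}_k$ with $\gamma_k\in[0,1]$). *)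

theory Defs
  imports "HOL-Analysis.Analysis"
begin

definition lower_sol_set :: "('a \<Rightarrow> real) \<Rightarrow> 'a set \<Rightarrow> 'a set" where
  "lower_sol_set g Z = {z \<in> Z. \<forall>y\<in>Z. g z \<le> g y}"

definition cut_set :: "'a set \<Rightarrow> ('a \<Rightarrow> real) \<Rightarrow> ('a::real_inner \<Rightarrow> 'a) \<Rightarrow> 'a \<Rightarrow> 'a \<Rightarrow> 'a set" where
  "cut_set Z g G x0 xk = Z \<inter> {s. G xk \<bullet> (s - xk) \<le> g x0 - g xk}"

end

theory Submission
  imports Defs
begin

text \<open>Every iterate is a convex combination of points of Z, hence lies in Z. For a convex
  differentiable \<open>g\<close> the first-order condition gives
  \<open>\<langle>\<nabla>g(x\<^sub>k), z - x\<^sub>k\<rangle> \<le> g(z) - g(x\<^sub>k)\<close>, and for a minimiser \<open>z\<close> of \<open>g\<close> over Z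
  the right-hand side is at most \<open>g(x\<^sub>0) - g(x\<^sub>k)\<close> because \<open>x\<^sub>0 \<in> Z\<close>.\<close>

lemma convex_on_imp_above_derivative:
  fixes g :: "'a::real_normed_vector \<Rightarrow> real"
  assumes conv: "convex_on S g" and x: "x \<in> S" and y: "y \<in> S"
    and deriv: "(g has_derivative g') (at x within S)"
  shows "g' (y - x) \<le> g y - g x"
proof -
  define \<phi> where "\<phi> t = g (x + t *\<^sub>R (y - x))" for t :: real
  have segment: "x + t *\<^sub>R (y - x) \<in> S" if "t \<in> {0..1}" for t
  proof -
    have "x + t *\<^sub>R (y - x) = (1 - t) *\<^sub>R x + t *\<^sub>R y"
      by (simp add: algebra_simps)
    then show ?thesis
      using that convexD[OF convex_on_imp_convex[OF conv] x y] by auto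
  qed
  have line: "((\<lambda>t. x + t *\<^sub>R (y - x)) has_derivative (\<lambda>t. t *\<^sub>R (y - x))) (at 0 within {0..1})"
    by (auto intro!: derivative_eq_intros)
  have "(g has_derivative g') (at (x + 0 *\<^sub>R (y - x)) within (\<lambda>t. x + t *\<^sub>R (y - x)) ` {0..1})"
    using segment by (auto intro: has_derivative_subset[OF deriv])
  from diff_chain_within[OF line this]
  have "(\<phi> has_derivative (\<lambda>t. t * g' (y - x))) (at 0 within {0..1})"
    using linear_cmul[OF has_derivative_linear[OF deriv]] by (simp add: \<phi>_def[abs_def] o_def)
  then have "(\<phi> has_field_derivative g' (y - x)) (at 0 within {0..1})"
    unfolding has_field_derivative_def by (rule has_derivative_eq_rhs) (auto simp: mult.commute)
  then have "((\<lambda>t. (\<phi> t - \<phi> 0) / (t - 0)) \<longlongrightarrow> g' (y - x)) (at 0 within {0..1})"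
    by (simp only: has_field_derivative_iff)
  moreover have "\<forall>\<^sub>F t in at 0 within {0..1}. (\<phi> t - \<phi> 0) / (t - 0) \<le> g y - g x"
    unfolding eventually_at_filter
  proof (intro always_eventually allI impI)
    fix t :: real assume t: "t \<noteq> 0" "t \<in> {0..1}"
    have "\<phi> t = g ((1 - t) *\<^sub>R x + t *\<^sub>R y)"
      by (simp add: \<phi>_def algebra_simps)
    also have "\<dots> \<le> (1 - t) * g x + t * g y"
      using t by (intro convex_onD[OF conv] x y) auto
    finally have "\<phi> t - \<phi> 0 \<le> t * (g y - g x)"
      by (simp add: \<phi>_def algebra_simps)
    then show "(\<phi> t - \<phi> 0) / (t - 0) \<le> g y - g x"
      using t by (simp add: divide_le_eq mult.commute)
  qed
  moreover have "at (0::real) within {0..1} \<noteq> bot"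
    by (simp add: at_within_Icc_at_right)
  ultimately show ?thesis
    by (rule tendsto_upperbound)
qed

lemma lower_sol_set_subset_cut_set:
  fixes g :: "'a::real_inner \<Rightarrow> real"
  assumes "convex_on Z g" and "x0 \<in> Z" and "xk \<in> Z"
    and "(g has_derivative (\<lambda>h. G xk \<bullet> h)) (at xk within Z)"
  shows "lower_sol_set g Z \<subseteq> cut_set Z g G x0 xk"
proof
  fix z assume "z \<in> lower_sol_set g Z"
  then have z: "z \<in> Z" and "g z \<le> g x0"
    using \<open>x0 \<in> Z\<close> by (auto simp: lower_sol_set_def)
  moreover have "G xk \<bullet> (z - xk) \<le> g z - g xk"
    using convex_on_imp_above_derivative[OF assms(1) \<open>xk \<in> Z\<close> z assms(4)] .
  ultimately show "z \<in> cut_set Z g G x0 xk"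
    by (simp add: cut_set_def)
qed

lemma convex_combination_iterates_in:
  assumes "convex Z" and "x 0 \<in> Z" and "\<And>j. s j \<in> Z" and "\<And>j. 0 \<le> \<gamma> j \<and> \<gamma> j \<le> 1"
    and "\<And>j. x (Suc j) = (1 - \<gamma> j) *\<^sub>R x j + \<gamma> j *\<^sub>R s j"
  shows "x k \<in> Z"
  by (induction k) (use assms in \<open>auto intro: convexD\<close>)

theorem lemma1:
  fixes Z :: "'a::euclidean_space set"
    and f g :: "'a \<Rightarrow> real" and F G :: "'a \<Rightarrow> 'a"
    and U :: "'a set" and x s :: "nat \<Rightarrow> 'a" and \<gamma> :: "nat \<Rightarrow> real"
    and eps_g :: real and k :: nat
  assumes Zcompact: "compact Z" and Zconvex: "convex Z"
    and Uopen: "open U" and ZU: "Z \<subseteq> U"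
    and gconv: "convex_on U g"
    and gderiv: "\<And>z. z \<in> U \<Longrightarrow> (g has_derivative (\<lambda>h. G z \<bullet> h)) (at z)"
    and Gcont: "continuous_on U G"
    and fderiv: "\<And>z. (f has_derivative (\<lambda>h. F z \<bullet> h)) (at z)"
    and x0: "x 0 \<in> Z"
    and x0_eps: "g (x 0) - (INF z\<in>Z. g z) \<le> eps_g / 2"
    and s_min: "\<And>j. s j \<in> cut_set Z g G (x 0) (x j) \<and>
                    (\<forall>y\<in>cut_set Z g G (x 0) (x j). F (x j) \<bullet> s j \<le> F (x j) \<bullet> y)"
    and gamma: "\<And>j. 0 \<le> \<gamma> j \<and> \<gamma> j \<le> 1"
    and step: "\<And>j. x (Suc j) = (1 - \<gamma> j) *\<^sub>R x j + \<gamma> j *\<^sub>R s j"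
  shows "lower_sol_set g Z \<subseteq> cut_set Z g G (x 0) (x k)"
proof (rule lower_sol_set_subset_cut_set)
  have "s j \<in> Z" for j
    using s_min[of j] by (simp add: cut_set_def)
  then show xk: "x k \<in> Z"
    using convex_combination_iterates_in[OF Zconvex x0 _ gamma step] by blast
  show "convex_on Z g"
    using convex_on_subset[OF gconv ZU Zconvex] .
  show "(g has_derivative (\<lambda>h. G (x k) \<bullet> h)) (at (x k) within Z)"
    using gderiv xk ZU by (blast intro: has_derivative_at_withinI)
qed (fact x0)

end
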